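(* There exists an integer $K=K(d)$ such that for every $\varepsilon\in(0,1)$ there is a partition of $\mathrm{Sh}^-(\varepsilon)$ into $K$ measurable sets $A_1(\varepsilon),\dots,A_K(\varepsilon)$, each of positive Lebesgue measure, with the following property: for any points $x_i\in A_i(\varepsilon)$, $i=1,\dots,K$, the connected component containing the origin of $\mathbb{R}^d\setminus\bigcup_{i=1}^K(x_i+\partial\mathbb{B})$ is contained in $\mathbb{B}_{2\varepsilon}=\{x:\|x\|<2\varepsilon\}$.
   Context: $\mathbb{B}$ is the closed unit ball in $\mathbb{R}^d$, $\partial\mathbb{B}$ the unit sphere, and $\mathrm{Sh}^-(\varepsilon)=\{x\in\mathbb{R}^d:\|x\|\in(1-\varepsilon,1)\}$ the inner spherical shell of width $\varepsilon$. *)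

theory Defs
  imports "HOL-Analysis.Analysis"
begin

definition inner_shell :: "real \<Rightarrow> 'a::euclidean_space set" where
  "inner_shell e = {x. 1 - e < norm x \<and> norm x < 1}"

end

theory Submission
  imports Defs
begin

text \<open>Cover the unit sphere by finitely many balls of radius 1/2 centred at unit vectors
  \<open>p\<^sub>1, \<dots>, p\<^sub>K\<close>, and cut the shell into the cells on which \<open>x \<bullet> p\<^sub>i\<close> is maximal
  (ties going to the least index). Each cell contains a neighbourhood of \<open>(1 - e/2) p\<^sub>i\<close>,
  so it has positive measure. If \<open>x\<^sub>i\<close> lies in the \<open>i\<close>-th cell, the component of the origin
  lies in every ball \<open>B(x\<^sub>i, 1)\<close>. Given \<open>y\<close> with \<open>|y| \<ge> 2e\<close>, pick \<open>p\<^sub>j\<close> close to \<open>-y/|y|\<close>;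
  the direction of \<open>x\<^sub>j\<close> is then also close to \<open>p\<^sub>j\<close>, so \<open>x\<^sub>j\<close> and \<open>y\<close> enclose an angle of
  more than 120 degrees and the law of cosines gives \<open>|y - x\<^sub>j| \<ge> 1\<close>.\<close>

lemma emeasure_lebesgue_pos_if_interior:
  fixes A :: "'a::euclidean_space set"
  assumes "a \<in> interior A" "A \<in> sets lebesgue"
  shows "0 < emeasure lebesgue A"
proof -
  obtain r where r: "0 < r" "ball a r \<subseteq> A"
    using assms(1) by (meson mem_interior)
  have "emeasure lebesgue (ball a r) = ennreal (measure lborel (ball a r))"
    using emeasure_lborel_ball_finite[of a r] by (subst emeasure_eq_ennreal_measure) auto
  then have "0 < emeasure lebesgue (ball a r)"
    using content_ball_pos[OF r(1)] by simp
  also have "\<dots> \<le> emeasure lebesgue A"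
    using r(2) assms(2) by (intro emeasure_mono) auto
  finally show ?thesis .
qed

lemma connected_component_subset_ball:
  fixes c :: "'a::real_normed_vector"
  assumes "S \<inter> sphere c r = {}" "a \<in> ball c r"
  shows "connected_component_set S a \<subseteq> ball c r"
proof (cases "a \<in> S")
  case False
  then show ?thesis by (metis connected_component_eq_empty empty_subsetI)
next
  case True
  let ?C = "connected_component_set S a"
  have sub: "?C \<subseteq> ball c r \<union> - cball c r"
    using connected_component_subset[of S a] assms(1) by (auto simp: sphere_def ball_def cball_def)
  have "a \<in> ball c r \<inter> ?C"
    using True assms(2) by (simp add: connected_component_refl)
  moreover have "ball c r \<inter> ?C = {} \<or> - cball c r \<inter> ?C = {}"
    by (rule connectedD[OF connected_connected_component]) (use sub in auto)
  ultimately show ?thesis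
    using sub by blast
qed

lemma norm_diff_unit_sq:
  fixes u v :: "'a::real_inner"
  assumes "norm u = 1" "norm v = 1"
  shows "(norm (u - v))\<^sup>2 = 2 - 2 * (u \<bullet> v)"
  using assms by (simp add: power2_norm_eq_inner inner_diff_left inner_diff_right inner_commute norm_eq_1)

lemma inner_unit_lt_1:
  fixes u v :: "'a::real_inner"
  assumes "norm u = 1" "norm v = 1" "u \<noteq> v"
  shows "u \<bullet> v < 1"
  using norm_diff_unit_sq[OF assms(1,2)] assms(3)
  by (smt (verit) zero_less_norm_iff zero_less_power2 right_minus_eq)

lemma inner_unit_gt_7_8_iff:
  fixes u v :: "'a::real_inner"
  assumes "norm u = 1" "norm v = 1"
  shows "7/8 < u \<bullet> v \<longleftrightarrow> dist u v < 1/2"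
proof -
  have "dist u v < 1/2 \<longleftrightarrow> (dist u v)\<^sup>2 < (1/2)\<^sup>2"
    using power2_less_imp_less[of "dist u v" "1/2"] power_strict_mono[of "dist u v" "1/2" 2] by auto
  then show ?thesis
    using norm_diff_unit_sq[OF assms] by (simp add: dist_norm power2_eq_square mult.commute)
qed

lemma inner_gt_half_if_near_common_unit:
  fixes u w p :: "'a::real_inner"
  assumes "norm u = 1" "norm w = 1" "norm p = 1" "7/8 < u \<bullet> p" "7/8 < w \<bullet> p"
  shows "1/2 < u \<bullet> w"
proof -
  have "dist u p < 1/2" "dist w p < 1/2"
    using assms inner_unit_gt_7_8_iff by blast+
  then have "norm (u - w) < 1"
    using dist_triangle[of u w p] by (simp add: dist_commute dist_norm)
  then have "(norm (u - w))\<^sup>2 < 1"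
    using power_strict_mono[of "norm (u - w)" 1 2] by simp
  then show ?thesis
    using norm_diff_unit_sq[OF assms(1,2)] by simp
qed

lemma one_le_dist_if_wide_angle:
  fixes x y :: "'a::real_inner"
  assumes e: "0 < e" "e < 1" and x: "1 - e \<le> norm x" and y: "2 * e \<le> norm y"
    and angle: "norm x * norm y / 2 \<le> - (x \<bullet> y)"
  shows "1 \<le> dist x y"
proof -
  have "(dist x y)\<^sup>2 = (norm y)\<^sup>2 + (norm x)\<^sup>2 - 2 * (x \<bullet> y)"
    by (simp add: dist_norm power2_norm_eq_inner algebra_simps inner_commute)
  also have "\<dots> \<ge> (norm y)\<^sup>2 + (norm x)\<^sup>2 + norm y * norm x"
    using angle by (simp add: algebra_simps)
  also have "(norm y)\<^sup>2 + (norm x)\<^sup>2 + norm y * norm x \<ge> (2 * e)\<^sup>2 + (1 - e)\<^sup>2 + (2 * e) * (1 - e)"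
    using x y e by (intro add_mono power_mono mult_mono) auto
  finally have "1 + 3 * e\<^sup>2 \<le> (dist x y)\<^sup>2"
    by (simp add: power2_eq_square algebra_simps)
  then have "1\<^sup>2 \<le> (dist x y)\<^sup>2"
    by (smt (verit) zero_le_power2 one_power2)
  then show ?thesis
    by (rule power2_le_imp_le) simp
qed

lemma unit_sphere_finite_net:
  obtains K :: nat and p :: "nat \<Rightarrow> 'a::euclidean_space"
  where "1 \<le> K" "inj_on p {1..K}" "\<And>i. i \<in> {1..K} \<Longrightarrow> norm (p i) = 1"
    "\<And>w. norm w = 1 \<Longrightarrow> \<exists>j\<in>{1..K}. 7/8 < w \<bullet> p j"
proof -
  have "sphere (0::'a) 1 \<subseteq> (\<Union>c\<in>sphere 0 1. ball c (1/2))"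
    by (meson UN_I centre_in_ball half_gt_zero_iff subsetI zero_less_one)
  then obtain P where P: "P \<subseteq> sphere (0::'a) 1" "finite P" "sphere 0 1 \<subseteq> (\<Union>c\<in>P. ball c (1/2))"
    using compactE_image[OF compact_sphere, of "sphere (0::'a) 1" "\<lambda>c. ball c (1/2)"] by blast
  obtain p where p: "bij_betw p {1..card P} P"
    using ex_bij_betw_nat_finite_1[OF P(2)] by blast
  have unit: "norm (p i) = 1" if "i \<in> {1..card P}" for i
  proof -
    have "p i \<in> sphere 0 1"
      using bij_betwE[OF p] that P(1) by blast
    then show ?thesis
      by simp
  qed
  have net: "\<exists>j\<in>{1..card P}. 7/8 < w \<bullet> p j" if w: "norm w = 1" for w :: 'a
  proof -
    have "w \<in> (\<Union>c\<in>P. ball c (1/2))"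
      using w P(3) by (simp add: subset_iff)
    then obtain c where c: "c \<in> P" "dist w c < 1/2"
      by (auto simp: dist_commute)
    obtain j where j: "j \<in> {1..card P}" "p j = c"
      using c(1) bij_betw_imp_surj_on[OF p] by (metis imageE)
    then have "7/8 < w \<bullet> p j"
      using inner_unit_gt_7_8_iff[OF w unit[OF j(1)]] c(2) by simp
    with j(1) show ?thesis ..
  qed
  obtain j where "j \<in> {1..card P}"
    using net[OF norm_Basis[OF SOME_Basis]] by blast
  then have "1 \<le> card P"
    by simp
  from that[OF this bij_betw_imp_inj_on[OF p] unit net] show ?thesis .
qed

definition first_argmax_cell :: "(nat \<Rightarrow> 'a \<Rightarrow> real) \<Rightarrow> nat \<Rightarrow> nat \<Rightarrow> 'a set" where
  "first_argmax_cell f K i =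
     {x. (\<forall>k\<in>{1..K}. f k x \<le> f i x) \<and> (\<forall>k\<in>{1..K}. k < i \<longrightarrow> f k x < f i x)}"

lemma disjoint_family_on_first_argmax_cell:
  "disjoint_family_on (first_argmax_cell f K) {1..K}"
proof -
  have False if "i \<in> {1..K}" "j \<in> {1..K}" "i < j"
    and "x \<in> first_argmax_cell f K i" "x \<in> first_argmax_cell f K j" for i j x
  proof -
    have "f i x < f j x" and "f j x \<le> f i x"
      using that unfolding first_argmax_cell_def by auto
    then show False by simp
  qed
  then show ?thesis
    unfolding disjoint_family_on_def by (metis disjoint_iff linorder_neqE_nat)
qed

lemma UN_first_argmax_cell:
  assumes "1 \<le> K"
  shows "(\<Union>i\<in>{1..K}. first_argmax_cell f K i) = UNIV"
proof -
  have "x \<in> (\<Union>i\<in>{1..K}. first_argmax_cell f K i)" for x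
  proof -
    define Q where "Q i \<longleftrightarrow> i \<in> {1..K} \<and> (\<forall>k\<in>{1..K}. f k x \<le> f i x)" for i
    obtain j where "j \<in> {1..K}" "f j x = Max ((\<lambda>k. f k x) ` {1..K})"
      using Max_in[of "(\<lambda>k. f k x) ` {1..K}"] assms by fastforce
    then have "Q j"
      unfolding Q_def by simp
    define i where "i = (LEAST i. Q i)"
    have "Q i"
      unfolding i_def by (rule LeastI[of Q j, OF \<open>Q j\<close>])
    moreover have "f k x < f i x" if k: "k \<in> {1..K}" "k < i" for k
    proof -
      have "\<not> Q k"
        using not_less_Least[of k Q] k(2) unfolding i_def by blast
      then obtain k' where "k' \<in> {1..K}" "f k x < f k' x"
        using k(1) unfolding Q_def by (meson not_le)
      with \<open>Q i\<close> show ?thesis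
        unfolding Q_def by fastforce
    qed
    ultimately show ?thesis
      unfolding Q_def first_argmax_cell_def by blast
  qed
  then show ?thesis by blast
qed

lemma first_argmax_cell_borel:
  assumes "\<And>k. continuous_on UNIV (f k)"
  shows "first_argmax_cell f K i \<in> sets borel"
proof -
  let ?C = "\<Inter>k\<in>{1..K}. {x. f k x \<le> f i x}"
  let ?U = "\<Inter>k\<in>{k\<in>{1..K}. k < i}. {x. f k x < f i x}"
  have "closed ?C"
    using assms by (intro closed_INT ballI closed_Collect_le continuous_on_const)
  moreover have "open ?U"
    using assms by (intro open_INT ballI open_Collect_less) auto
  ultimately have "?C \<inter> ?U \<in> sets borel"
    by (intro sets.Int borel_closed borel_open)
  moreover have "first_argmax_cell f K i = ?C \<inter> ?U"
    unfolding first_argmax_cell_def by blast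
  ultimately show ?thesis
    by simp
qed

lemma strict_argmax_in_interior_first_argmax_cell:
  assumes "\<And>k. continuous_on UNIV (f k)" and "\<And>k. k \<in> {1..K} - {i} \<Longrightarrow> f k a < f i a"
  shows "a \<in> interior (first_argmax_cell f K i)"
proof -
  let ?U = "\<Inter>k\<in>{1..K} - {i}. {x. f k x < f i x}"
  have "open ?U"
    using assms(1) by (intro open_INT ballI open_Collect_less) auto
  moreover have "?U \<subseteq> first_argmax_cell f K i"
  proof
    fix x assume "x \<in> ?U"
    then have strict: "f k x < f i x" if "k \<in> {1..K}" "k \<noteq> i" for k
      using that by blast
    then have "f k x \<le> f i x" if "k \<in> {1..K}" for k
      using that by (cases "k = i") (auto intro: less_imp_le)
    with strict show "x \<in> first_argmax_cell f K i"
      unfolding first_argmax_cell_def by auto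
  qed
  moreover have "a \<in> ?U"
    using assms(2) by blast
  ultimately show ?thesis
    using interior_maximal by blast
qed

lemma inner_shell_open: "open (inner_shell e :: 'a::euclidean_space set)"
proof -
  have "inner_shell e = {x::'a. 1 - e < norm x} \<inter> {x. norm x < 1}"
    unfolding inner_shell_def by auto
  then show ?thesis
    by (simp add: open_Int open_Collect_less continuous_on_norm continuous_on_const)
qed

lemma scaled_centre_in_interior_shell_cell:
  fixes p :: "nat \<Rightarrow> 'a::euclidean_space"
  assumes "inj_on p {1..K}" "\<And>i. i \<in> {1..K} \<Longrightarrow> norm (p i) = 1"
    and e: "0 < e" "e < 1" and i: "i \<in> {1..K}"
  shows "(1 - e/2) *\<^sub>R p i \<in> interior (inner_shell e \<inter> first_argmax_cell (\<lambda>k x. x \<bullet> p k) K i)"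
proof -
  have "(1 - e/2) *\<^sub>R p i \<in> inner_shell e"
    using assms unfolding inner_shell_def by simp
  moreover have "(1 - e/2) *\<^sub>R p i \<in> interior (first_argmax_cell (\<lambda>k x. x \<bullet> p k) K i)"
  proof (rule strict_argmax_in_interior_first_argmax_cell)
    fix k assume k: "k \<in> {1..K} - {i}"
    then have "p i \<bullet> p k < 1"
      using assms inner_unit_lt_1[of "p i" "p k"] by (auto simp: inj_on_eq_iff)
    then show "(1 - e/2) *\<^sub>R p i \<bullet> p k < (1 - e/2) *\<^sub>R p i \<bullet> p i"
      using assms e by (simp add: norm_eq_1)
  qed (intro continuous_intros)
  ultimately show ?thesis
    by (simp add: interior_Int interior_open inner_shell_open)
qed

lemma component_of_origin_subset_ball:
  fixes x p :: "nat \<Rightarrow> 'a::euclidean_space"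
  assumes net: "\<And>w. norm w = 1 \<Longrightarrow> \<exists>j\<in>{1..K}. 7/8 < w \<bullet> p j"
    and unit: "\<And>i. i \<in> {1..K} \<Longrightarrow> norm (p i) = 1"
    and e: "0 < e" "e < 1"
    and x: "\<And>i. i \<in> {1..K} \<Longrightarrow> x i \<in> inner_shell e \<inter> first_argmax_cell (\<lambda>k z. z \<bullet> p k) K i"
  shows "connected_component_set (UNIV - (\<Union>i\<in>{1..K}. sphere (x i) 1)) 0 \<subseteq> ball 0 (2 * e)"
proof
  fix y assume y: "y \<in> connected_component_set (UNIV - (\<Union>i\<in>{1..K}. sphere (x i) 1)) 0"
  have shell: "1 - e < norm (x i)" "norm (x i) < 1" if "i \<in> {1..K}" for i
    using x[OF that] unfolding inner_shell_def by auto
  have near: "y \<in> ball (x i) 1" if i: "i \<in> {1..K}" for i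
  proof (rule subsetD[OF connected_component_subset_ball y])
    show "(UNIV - (\<Union>i\<in>{1..K}. sphere (x i) 1)) \<inter> sphere (x i) 1 = {}"
      using i by blast
    show "0 \<in> ball (x i) 1"
      using shell[OF i] by simp
  qed
  show "y \<in> ball 0 (2 * e)"
  proof (rule ccontr)
    assume "y \<notin> ball 0 (2 * e)"
    then have ny: "2 * e \<le> norm y"
      by simp
    then have "y \<noteq> 0"
      using e by auto
    define w where "w = - (y /\<^sub>R norm y)"
    have "norm w = 1"
      unfolding w_def using \<open>y \<noteq> 0\<close> by simp
    then obtain j where j: "j \<in> {1..K}" "7/8 < w \<bullet> p j"
      using net by blast
    have "x j \<noteq> 0"
      using shell[OF j(1)] e by auto
    define u where "u = x j /\<^sub>R norm (x j)"
    have "norm u = 1"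
      unfolding u_def using \<open>x j \<noteq> 0\<close> by simp
    then obtain k where k: "k \<in> {1..K}" "7/8 < u \<bullet> p k"
      using net by blast
    txt \<open>\<open>p\<^sub>j\<close> maximises \<open>x\<^sub>j \<bullet> p\<close>, so it is at least as close to \<open>u\<close> as the net point \<open>p\<^sub>k\<close>.\<close>
    have "x j \<bullet> p k \<le> x j \<bullet> p j"
      using x[OF j(1)] k(1) unfolding first_argmax_cell_def by auto
    then have "u \<bullet> p k \<le> u \<bullet> p j"
      unfolding u_def by (simp add: mult_left_mono)
    then have "1/2 < u \<bullet> w"
      using inner_gt_half_if_near_common_unit[OF \<open>norm u = 1\<close> \<open>norm w = 1\<close> unit[OF j(1)]] j k
      by linarith
    then have "norm (x j) * norm y / 2 \<le> norm (x j) * norm y * (u \<bullet> w)"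
      using mult_left_mono[of "1/2" "u \<bullet> w" "norm (x j) * norm y"] by simp
    also have "\<dots> = - (x j \<bullet> y)"
      unfolding u_def w_def using \<open>x j \<noteq> 0\<close> \<open>y \<noteq> 0\<close> by (simp add: field_simps)
    finally have "1 \<le> dist (x j) y"
      using one_le_dist_if_wide_angle[of e "x j" y] e shell[OF j(1)] ny by auto
    then show False
      using near[OF j(1)] by simp
  qed
qed

theorem mainTheorem9:
  shows "\<exists>K::nat. \<forall>e::real. 0 < e \<and> e < 1 \<longrightarrow>
    (\<exists>A :: nat \<Rightarrow> 'a::euclidean_space set.
       disjoint_family_on A {1..K} \<and>
       (\<Union>i\<in>{1..K}. A i) = inner_shell e \<and>
       (\<forall>i\<in>{1..K}. A i \<in> sets lebesgue \<and> emeasure lebesgue (A i) > 0) \<and>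
       (\<forall>x :: nat \<Rightarrow> 'a. (\<forall>i\<in>{1..K}. x i \<in> A i) \<longrightarrow>
          connected_component_set (UNIV - (\<Union>i\<in>{1..K}. sphere (x i) 1)) 0
            \<subseteq> ball 0 (2 * e)))"
proof -
  obtain K and p :: "nat \<Rightarrow> 'a" where K: "1 \<le> K" and inj: "inj_on p {1..K}"
    and unit: "\<And>i. i \<in> {1..K} \<Longrightarrow> norm (p i) = 1"
    and net: "\<And>w. norm w = 1 \<Longrightarrow> \<exists>j\<in>{1..K}. 7/8 < w \<bullet> p j"
    using unit_sphere_finite_net by metis
  define A where "A e i = inner_shell e \<inter> first_argmax_cell (\<lambda>k x. x \<bullet> p k) K i" for e i
  have disjoint: "disjoint_family_on (A e) {1..K}" for e
    using disjoint_family_on_first_argmax_cell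
    by (rule disjoint_family_on_bisimulation) (auto simp: A_def)
  have cover: "(\<Union>i\<in>{1..K}. A e i) = inner_shell e" for e
    unfolding A_def Int_UN_distrib[symmetric] UN_first_argmax_cell[OF K] by simp
  have measurable: "A e i \<in> sets lebesgue" for e i
  proof -
    have "A e i \<in> sets borel"
      unfolding A_def
      by (intro sets.Int borel_open inner_shell_open first_argmax_cell_borel continuous_intros)
    then show ?thesis by simp
  qed
  have positive: "0 < emeasure lebesgue (A e i)" if "0 < e" "e < 1" "i \<in> {1..K}" for e i
    using emeasure_lebesgue_pos_if_interior[OF _ measurable]
      scaled_centre_in_interior_shell_cell[OF inj unit that] unfolding A_def by blast
  have small: "connected_component_set (UNIV - (\<Union>i\<in>{1..K}. sphere (x i) 1)) 0 \<subseteq> ball 0 (2 * e)"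
    if "0 < e" "e < 1" "\<forall>i\<in>{1..K}. x i \<in> A e i" for e x
    using component_of_origin_subset_ball[OF net unit that(1,2)] that(3) unfolding A_def by blast
  show ?thesis
    using disjoint cover measurable positive small
    by (intro exI[of _ K] allI impI exI[of _ "A e" for e] conjI ballI) blast+
qed

end
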